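(* The greedy algorithm g-HHL is an $O(\sqrt n\log n)$-approximation algorithm for HL: on every input graph with $n$ vertices, the hub labeling it outputs has total size at most $O(\sqrt n\log n)$ times the minimum total size of a hub labeling of that graph.
   Context: Input: a directed graph $G=(V,E)$, $n=|V|$, with nonnegative arc lengths and no zero-length cycles; $\mathrm{dist}(u,w)$ is the shortest-path distance. A hub labeling (HL) assigns to each $v$ a forward label $L_f(v)\subseteq V$ and backward label $L_b(v)\subseteq V$ such that for every ordered pair $(u,w)$ with $w$ reachable from $u$, $L_f(u)\cap L_b(w)$ contains a vertex on some shortest $u$–$w$ path; its size is $\sum_v(|L_f(v)|+|L_b(v)|)$. (For undirected graphs $L_f=L_b=L$, pairs are unordered and the size is $\sum_v|L(v)|$.) g-HHL: start with empty labels; let $U$ be the set of uncovered pairs. For each not-yet-selected vertex $v$, the center graph $G_v$ is the bipartite graph with two copies $X,Y$ of $V$ and an arc $(u,w)$ for each $(u,w)\in U$ such that some shortest $u$–$w$ path contains $v$ (in the undirected case: the graph on $V$ with an edge, possibly a self-loop, $\{u,w\}$ for each uncovered unordered pair with a shortest path through $v$). In each iteration g-HHL selects a not-yet-selected vertex $v$ whose center graph has the maximum number of edges (ties arbitrary) and adds $v$ to $L_f(u)$ for each non-isolated $u\in X$ and to $L_b(w)$ for each non-isolated $w\in Y$ (undirected case: to $L(u)$ for each non-isolated $u$), until all pairs are covered. The output is a hierarchical labeling. *)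

theory Defs
  imports Complex_Main
begin

text \<open>Directed graphs with vertex set V (a finite set of naturals; any finite
vertex set can be relabelled into nat), arc set E and arc lengths len.\<close>

definition walk :: "nat set \<Rightarrow> (nat \<times> nat) set \<Rightarrow> nat list \<Rightarrow> bool" where
  "walk V E P \<longleftrightarrow> P \<noteq> [] \<and> set P \<subseteq> V \<and>
     (\<forall>i. Suc i < length P \<longrightarrow> (P ! i, P ! Suc i) \<in> E)"

definition walk_len :: "(nat \<times> nat \<Rightarrow> real) \<Rightarrow> nat list \<Rightarrow> real" where
  "walk_len len P = (\<Sum>i<length P - 1. len (P ! i, P ! Suc i))"

definition reachable :: "nat set \<Rightarrow> (nat \<times> nat) set \<Rightarrow> nat \<Rightarrow> nat \<Rightarrow> bool" where
  "reachable V E u w \<longleftrightarrow> (\<exists>P. walk V E P \<and> hd P = u \<and> last P = w)"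

definition shortest_path ::
  "nat set \<Rightarrow> (nat \<times> nat) set \<Rightarrow> (nat \<times> nat \<Rightarrow> real) \<Rightarrow> nat \<Rightarrow> nat \<Rightarrow> nat list \<Rightarrow> bool" where
  "shortest_path V E len u w P \<longleftrightarrow> walk V E P \<and> hd P = u \<and> last P = w \<and>
     (\<forall>Q. walk V E Q \<and> hd Q = u \<and> last Q = w \<longrightarrow> walk_len len P \<le> walk_len len Q)"

definition on_sp ::
  "nat set \<Rightarrow> (nat \<times> nat) set \<Rightarrow> (nat \<times> nat \<Rightarrow> real) \<Rightarrow> nat \<Rightarrow> nat \<Rightarrow> nat \<Rightarrow> bool" where
  "on_sp V E len v u w \<longleftrightarrow> (\<exists>P. shortest_path V E len u w P \<and> v \<in> set P)"

definition valid_graph :: "nat set \<Rightarrow> (nat \<times> nat) set \<Rightarrow> (nat \<times> nat \<Rightarrow> real) \<Rightarrow> bool" where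
  "valid_graph V E len \<longleftrightarrow> finite V \<and> E \<subseteq> V \<times> V \<and> (\<forall>e\<in>E. 0 \<le> len e) \<and>
     (\<forall>P. walk V E P \<and> 2 \<le> length P \<and> hd P = last P \<longrightarrow> 0 < walk_len len P)"

definition is_HL ::
  "nat set \<Rightarrow> (nat \<times> nat) set \<Rightarrow> (nat \<times> nat \<Rightarrow> real) \<Rightarrow> (nat \<Rightarrow> nat set) \<Rightarrow> (nat \<Rightarrow> nat set) \<Rightarrow> bool" where
  "is_HL V E len Lf Lb \<longleftrightarrow> (\<forall>v\<in>V. Lf v \<subseteq> V \<and> Lb v \<subseteq> V) \<and>
     (\<forall>u\<in>V. \<forall>w\<in>V. reachable V E u w \<longrightarrow> (\<exists>h\<in>Lf u \<inter> Lb w. on_sp V E len h u w))"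

definition hl_size :: "nat set \<Rightarrow> (nat \<Rightarrow> nat set) \<Rightarrow> (nat \<Rightarrow> nat set) \<Rightarrow> nat" where
  "hl_size V Lf Lb = (\<Sum>v\<in>V. card (Lf v) + card (Lb v))"

definition hl_opt :: "nat set \<Rightarrow> (nat \<times> nat) set \<Rightarrow> (nat \<times> nat \<Rightarrow> real) \<Rightarrow> nat" where
  "hl_opt V E len = (LEAST s. \<exists>Lf Lb. is_HL V E len Lf Lb \<and> hl_size V Lf Lb = s)"

definition uncovered ::
  "nat set \<Rightarrow> (nat \<times> nat) set \<Rightarrow> (nat \<times> nat \<Rightarrow> real) \<Rightarrow> (nat \<Rightarrow> nat set) \<Rightarrow> (nat \<Rightarrow> nat set) \<Rightarrow> (nat \<times> nat) set" where
  "uncovered V E len Lf Lb = {(u, w). u \<in> V \<and> w \<in> V \<and> reachable V E u w \<and>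
       \<not> (\<exists>h\<in>Lf u \<inter> Lb w. on_sp V E len h u w)}"

text \<open>Arc set of the center graph G_v (arcs from copy X to copy Y).\<close>
definition center_graph ::
  "nat set \<Rightarrow> (nat \<times> nat) set \<Rightarrow> (nat \<times> nat \<Rightarrow> real) \<Rightarrow> (nat \<Rightarrow> nat set) \<Rightarrow> (nat \<Rightarrow> nat set) \<Rightarrow> nat \<Rightarrow> (nat \<times> nat) set" where
  "center_graph V E len Lf Lb v = {(u, w) \<in> uncovered V E len Lf Lb. on_sp V E len v u w}"

type_synonym ghhl_state = "nat set \<times> (nat \<Rightarrow> nat set) \<times> (nat \<Rightarrow> nat set)"

definition ghhl_step ::
  "nat set \<Rightarrow> (nat \<times> nat) set \<Rightarrow> (nat \<times> nat \<Rightarrow> real) \<Rightarrow> ghhl_state \<Rightarrow> ghhl_state \<Rightarrow> bool" where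
  "ghhl_step V E len st st' \<longleftrightarrow>
     (case st of (S, Lf, Lb) \<Rightarrow>
       uncovered V E len Lf Lb \<noteq> {} \<and>
       (\<exists>v\<in>V - S.
          (\<forall>v'\<in>V - S. card (center_graph V E len Lf Lb v') \<le> card (center_graph V E len Lf Lb v)) \<and>
          st' = (insert v S,
                 (\<lambda>u. if u \<in> fst ` center_graph V E len Lf Lb v then insert v (Lf u) else Lf u),
                 (\<lambda>w. if w \<in> snd ` center_graph V E len Lf Lb v then insert v (Lb w) else Lb w))))"

text \<open>(Lf, Lb) is a possible output of g-HHL (for some tie-breaking): reachable from
the empty labeling by iterations, with all pairs covered.\<close>
definition ghhl_output ::
  "nat set \<Rightarrow> (nat \<times> nat) set \<Rightarrow> (nat \<times> nat \<Rightarrow> real) \<Rightarrow> (nat \<Rightarrow> nat set) \<Rightarrow> (nat \<Rightarrow> nat set) \<Rightarrow> bool" where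
  "ghhl_output V E len Lf Lb \<longleftrightarrow>
     (\<exists>S. (ghhl_step V E len)\<^sup>*\<^sup>* ({}, (\<lambda>_. {}), (\<lambda>_. {})) (S, Lf, Lb) \<and>
          uncovered V E len Lf Lb = {})"

end

theory Submission
  imports Defs
begin

text \<open>Fix an optimal labeling of size OPT and let m be the maximum center-graph size in some
iteration. Every uncovered pair (u, w) is charged to a hub h of the optimal labeling with
h \<in> L_f(u) \<inter> L_b(w); the pairs charged to h form a subgraph of G_h with at most m arcs and at
most |A_h| |B_h| arcs, where A_h, B_h are the vertices holding h in the optimal labels. Hence
|U| \<le> \<Sum>_h min(m, |A_h||B_h|) \<le> \<Sum>_h \<surd>m (|A_h| + |B_h|)/2 = \<surd>m OPT/2, i.e. the greedy step
covers m \<ge> 4|U|^2/OPT^2 pairs while adding at most min(2m, 2n) hubs. A potential argument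
turns this into the bound 2\<surd>n OPT on the output, which is stronger than O(\<surd>n log n) OPT.\<close>

definition potential :: "real \<Rightarrow> real \<Rightarrow> real" where
  "potential a x = (if x \<le> a then 2 * x else 4 * a - 2 * a\<^sup>2 / x)"

lemma potential_mono:
  assumes "0 \<le> a" "0 \<le> x" "x \<le> y"
  shows "potential a x \<le> potential a y"
proof (cases "x \<le> a")
  case True
  show ?thesis
  proof (cases "y \<le> a")
    case True
    then show ?thesis using \<open>x \<le> a\<close> assms by (simp add: potential_def)
  next
    case False
    then have "a\<^sup>2 / y \<le> a" using assms by (simp add: power2_eq_square divide_le_eq mult_left_mono)
    then show ?thesis using False True by (simp add: potential_def)
  qed
next
  case False
  then have "a\<^sup>2 / y \<le> a\<^sup>2 / x" using assms by (intro divide_left_mono) auto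
  then show ?thesis using False assms by (simp add: potential_def)
qed

lemma potential_nonneg:
  assumes "0 \<le> a" "0 \<le> x"
  shows "0 \<le> potential a x"
proof (cases "x \<le> a")
  case False
  then have "a\<^sup>2 / x \<le> a" using assms by (simp add: power2_eq_square divide_le_eq mult_left_mono)
  then show ?thesis using False assms by (simp add: potential_def)
qed (use assms in \<open>simp add: potential_def\<close>)

lemma potential_le:
  assumes "0 \<le> a" "0 \<le> x"
  shows "potential a x \<le> 4 * a"
  using assms by (auto simp: potential_def)

text \<open>Above a the potential decreases by 2a^2(1/(U - m) - 1/U) \<ge> 2ma^2/U^2 \<ge> 2n when m pairs
are covered, below a by exactly 2m; either way it pays for the at most min(2m, 2n) new hubs.\<close>

lemma potential_pays_for_step:
  assumes "0 \<le> a" "0 < n" "0 \<le> m" "m \<le> U" "cost \<le> 2 * m" "cost \<le> 2 * n"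
    and "n * U\<^sup>2 \<le> m * a\<^sup>2"
  shows "cost + potential a (U - m) \<le> potential a U"
proof (cases "U \<le> a")
  case True
  then show ?thesis using assms by (simp add: potential_def)
next
  case False
  then have U: "U > 0" using assms by simp
  have n: "n \<le> m * a\<^sup>2 / U\<^sup>2" using assms(7) U by (simp add: le_divide_eq)
  show ?thesis
  proof (cases "U - m \<le> a")
    case False
    have Um: "U - m > 0" using False assms by simp
    have "m * a\<^sup>2 / U\<^sup>2 \<le> m * a\<^sup>2 / (U * (U - m))"
      using U Um assms
      by (intro divide_left_mono) (auto simp: power2_eq_square intro!: mult_left_mono)
    also have "\<dots> = a\<^sup>2 / (U - m) - a\<^sup>2 / U"
      using U Um by (simp add: field_simps)
    finally show ?thesis using n False \<open>\<not> U \<le> a\<close> assms by (simp add: potential_def)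
  next
    case True
    have "(U - a) * U \<le> m * (U + a)" using True assms by (intro mult_mono) auto
    then have "0 \<le> (U - a) * (m * (U + a) - U * (U - a))"
      using \<open>\<not> U \<le> a\<close> by (intro mult_nonneg_nonneg) (auto simp: algebra_simps)
    then have "2 * m * a\<^sup>2 \<le> 4 * a * U\<^sup>2 - 2 * a\<^sup>2 * U - 2 * U ^ 3 + 2 * m * U\<^sup>2"
      by (simp add: algebra_simps power2_eq_square power3_eq_cube)
    then have "2 * (m * a\<^sup>2 / U\<^sup>2) \<le> 4 * a - 2 * a\<^sup>2 / U - 2 * U + 2 * m"
      using U by (simp add: field_simps power2_eq_square power3_eq_cube)
    then show ?thesis using n True \<open>\<not> U \<le> a\<close> assms by (simp add: potential_def)
  qed
qed

lemma le_sqrt_mult_mean: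
  fixes x m p q :: real
  assumes "0 \<le> m" "0 \<le> p" "0 \<le> q" "x \<le> m" "x \<le> p * q"
  shows "x \<le> sqrt m * (p + q) / 2"
proof (cases "(p + q) / 2 \<le> sqrt m")
  case True
  have "p * q \<le> ((p + q) / 2) * ((p + q) / 2)"
    using zero_le_power2[of "p - q"] by (simp add: power2_eq_square algebra_simps)
  also have "\<dots> \<le> sqrt m * ((p + q) / 2)"
    using True assms by (intro mult_right_mono) auto
  finally show ?thesis using assms by simp
next
  case False
  have "m = sqrt m * sqrt m" using assms by simp
  also have "\<dots> \<le> sqrt m * ((p + q) / 2)"
    using False assms by (intro mult_left_mono) auto
  finally show ?thesis using assms by simp
qed

lemma sum_card_swap:
  assumes "finite V" "\<forall>u\<in>V. L u \<subseteq> V"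
  shows "(\<Sum>u\<in>V. card (L u)) = (\<Sum>h\<in>V. card {u\<in>V. h \<in> L u})"
proof -
  have "(\<Sum>u\<in>V. card (L u)) = (\<Sum>u\<in>V. \<Sum>h\<in>V. if h \<in> L u then 1 else 0)"
  proof (rule sum.cong[OF refl])
    fix u assume "u \<in> V"
    then have "V \<inter> L u = L u" using assms by blast
    then show "card (L u) = (\<Sum>h\<in>V. if h \<in> L u then 1 else 0)"
      using assms(1) by (simp add: sum.If_cases)
  qed
  also have "\<dots> = (\<Sum>h\<in>V. \<Sum>u\<in>V. if h \<in> L u then 1 else 0)"
    by (rule sum.swap)
  also have "\<dots> = (\<Sum>h\<in>V. card {u\<in>V. h \<in> L u})"
  proof (rule sum.cong[OF refl])
    fix h
    have "V \<inter> {u. h \<in> L u} = {u\<in>V. h \<in> L u}" by blast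
    then show "(\<Sum>u\<in>V. if h \<in> L u then 1 else 0) = card {u\<in>V. h \<in> L u}"
      using assms(1) by (simp add: sum.If_cases)
  qed
  finally show ?thesis .
qed

lemma hl_size_eq_sum_hub_holders:
  assumes "finite V" "is_HL V E len Lf Lb"
  shows "hl_size V Lf Lb = (\<Sum>h\<in>V. card {u\<in>V. h \<in> Lf u} + card {w\<in>V. h \<in> Lb w})"
  using assms sum_card_swap[of V Lf] sum_card_swap[of V Lb]
  by (simp add: hl_size_def is_HL_def sum.distrib)

lemma hl_opt_attained:
  assumes "is_HL V E len Lf Lb"
  obtains Lo Bo where "is_HL V E len Lo Bo" "hl_size V Lo Bo = hl_opt V E len"
  using LeastI_ex[of "\<lambda>s. \<exists>Lf Lb. is_HL V E len Lf Lb \<and> hl_size V Lf Lb = s"] assms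
  unfolding hl_opt_def by blast

lemma uncovered_subset: "uncovered V E len Lf Lb \<subseteq> V \<times> V"
  by (auto simp: uncovered_def)

lemma center_graph_subset_uncovered: "center_graph V E len Lf Lb v \<subseteq> uncovered V E len Lf Lb"
  by (auto simp: center_graph_def)

lemma finite_center_graph: "finite V \<Longrightarrow> finite (center_graph V E len Lf Lb v)"
  using center_graph_subset_uncovered uncovered_subset by (metis finite_SigmaI finite_subset)

lemma card_uncovered_le:
  assumes fin: "finite V" and HL: "is_HL V E len Lo Bo"
    and max: "\<forall>h\<in>V. card (center_graph V E len Lf Lb h) \<le> m"
  shows "real (card (uncovered V E len Lf Lb)) \<le> sqrt m * real (hl_size V Lo Bo) / 2"
proof -
  define U where "U = uncovered V E len Lf Lb"
  define A where "A h = {u\<in>V. h \<in> Lo u}" for h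
  define B where "B h = {w\<in>V. h \<in> Bo w}" for h
  define D where "D h = center_graph V E len Lf Lb h \<inter> A h \<times> B h" for h
  have finAB: "finite (A h)" "finite (B h)" for h using fin by (auto simp: A_def B_def)
  have "U \<subseteq> (\<Union>h\<in>V. D h)"
  proof
    fix p assume p: "p \<in> U"
    then obtain u w where uw: "p = (u, w)" "u \<in> V" "w \<in> V" "reachable V E u w"
      by (auto simp: U_def uncovered_def)
    then obtain h where "h \<in> Lo u" "h \<in> Bo w" "on_sp V E len h u w"
      using HL unfolding is_HL_def by blast
    moreover from this have "h \<in> V" using HL uw by (auto simp: is_HL_def)
    ultimately show "p \<in> (\<Union>h\<in>V. D h)"
      using p uw by (auto simp: D_def A_def B_def U_def center_graph_def)
  qed
  then have "card U \<le> card (\<Union>h\<in>V. D h)"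
    using fin by (intro card_mono) (auto simp: D_def A_def B_def)
  also have "\<dots> \<le> (\<Sum>h\<in>V. card (D h))"
    using fin by (intro card_UN_le)
  finally have "real (card U) \<le> (\<Sum>h\<in>V. real (card (D h)))"
    by (metis of_nat_le_iff of_nat_sum)
  also have "\<dots> \<le> (\<Sum>h\<in>V. sqrt m * (real (card (A h)) + real (card (B h))) / 2)"
  proof (rule sum_mono)
    fix h assume "h \<in> V"
    have "card (D h) \<le> card (center_graph V E len Lf Lb h)"
      using fin by (intro card_mono) (auto simp: D_def finite_center_graph)
    then have "real (card (D h)) \<le> real m" using max \<open>h \<in> V\<close> by fastforce
    moreover have "card (D h) \<le> card (A h) * card (B h)"
      using finAB card_mono[of "A h \<times> B h" "D h"] by (auto simp: D_def card_cartesian_product)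
    ultimately show "real (card (D h)) \<le> sqrt m * (real (card (A h)) + real (card (B h))) / 2"
      by (intro le_sqrt_mult_mean) (auto simp flip: of_nat_mult)
  qed
  also have "\<dots> = sqrt m * (\<Sum>h\<in>V. real (card (A h)) + real (card (B h))) / 2"
    by (simp add: sum_distrib_left sum_divide_distrib)
  also have "(\<Sum>h\<in>V. real (card (A h)) + real (card (B h))) = real (hl_size V Lo Bo)"
    using hl_size_eq_sum_hub_holders[OF fin HL] by (simp add: A_def B_def)
  finally show ?thesis by (simp add: U_def)
qed

definition add_hub :: "nat \<Rightarrow> nat set \<Rightarrow> (nat \<Rightarrow> nat set) \<Rightarrow> nat \<Rightarrow> nat set" where
  "add_hub v X L = (\<lambda>u. if u \<in> X then insert v (L u) else L u)"

lemma ghhl_step_iff: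
  "ghhl_step V E len (S, Lf, Lb) st' \<longleftrightarrow>
     uncovered V E len Lf Lb \<noteq> {} \<and>
     (\<exists>v\<in>V - S.
        (\<forall>v'\<in>V - S. card (center_graph V E len Lf Lb v') \<le> card (center_graph V E len Lf Lb v)) \<and>
        st' = (insert v S, add_hub v (fst ` center_graph V E len Lf Lb v) Lf,
                           add_hub v (snd ` center_graph V E len Lf Lb v) Lb))"
  by (simp add: ghhl_step_def add_hub_def)

lemma uncovered_add_hub_subset:
  fixes V E len Lf Lb v
  defines "C \<equiv> center_graph V E len Lf Lb v"
  shows "uncovered V E len (add_hub v (fst ` C) Lf) (add_hub v (snd ` C) Lb)
           \<subseteq> uncovered V E len Lf Lb - C"
proof
  fix p assume p: "p \<in> uncovered V E len (add_hub v (fst ` C) Lf) (add_hub v (snd ` C) Lb)"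
  obtain u w where uw: "p = (u, w)" by force
  have "p \<in> uncovered V E len Lf Lb"
    using p by (auto simp: uncovered_def add_hub_def)
  moreover have "p \<notin> C"
  proof
    assume "p \<in> C"
    then have "u \<in> fst ` C" "w \<in> snd ` C" "on_sp V E len v u w"
      using uw by (force simp: C_def center_graph_def)+
    then show False using p uw by (auto simp: uncovered_def add_hub_def)
  qed
  ultimately show "p \<in> uncovered V E len Lf Lb - C" by blast
qed

lemma center_graph_add_hub_subset:
  fixes V E len Lf Lb v
  defines "C \<equiv> center_graph V E len Lf Lb v"
  shows "center_graph V E len (add_hub v (fst ` C) Lf) (add_hub v (snd ` C) Lb) h
           \<subseteq> center_graph V E len Lf Lb h - C"
  using uncovered_add_hub_subset[where Lf = Lf and Lb = Lb and v = v]
  unfolding C_def center_graph_def by blast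

lemma hl_size_add_hub_le:
  assumes "finite V" "X \<subseteq> V" "Y \<subseteq> V"
  shows "hl_size V (add_hub v X Lf) (add_hub v Y Lb) \<le> hl_size V Lf Lb + card X + card Y"
proof -
  have "card (add_hub v Z L u) \<le> card (L u) + (if u \<in> Z then 1 else 0)" for Z L u
    by (cases "finite (L u)") (auto simp: add_hub_def card_insert_if)
  then have "hl_size V (add_hub v X Lf) (add_hub v Y Lb)
      \<le> (\<Sum>u\<in>V. (card (Lf u) + (if u \<in> X then 1 else 0)) + (card (Lb u) + (if u \<in> Y then 1 else 0)))"
    unfolding hl_size_def by (intro sum_mono add_mono)
  also have "\<dots> = hl_size V Lf Lb + card X + card Y"
    using assms by (simp add: hl_size_def sum.distrib sum.If_cases Int_absorb1)
  finally show ?thesis .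
qed

lemma hl_size_select_le:
  fixes V E len Lf Lb v
  defines "C \<equiv> center_graph V E len Lf Lb v"
  assumes fin: "finite V"
  shows "hl_size V (add_hub v (fst ` C) Lf) (add_hub v (snd ` C) Lb)
           \<le> hl_size V Lf Lb + 2 * min (card C) (card V)"
proof -
  have CV: "C \<subseteq> V \<times> V"
    unfolding C_def using center_graph_subset_uncovered uncovered_subset by blast
  then have finC: "finite C" using fin by (meson finite_SigmaI finite_subset)
  have CV': "fst ` C \<subseteq> V" "snd ` C \<subseteq> V" using CV by auto
  have "card (fst ` C) + card (snd ` C) \<le> 2 * min (card C) (card V)"
    using card_image_le[OF finC, of fst] card_image_le[OF finC, of snd]
      card_mono[OF fin CV'(1)] card_mono[OF fin CV'(2)]
    by (simp add: min_def)
  then show ?thesis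
    using hl_size_add_hub_le[OF fin CV', of v Lf Lb] by linarith
qed

lemma ghhl_run_labels_subset:
  assumes "(ghhl_step V E len)\<^sup>*\<^sup>* ({}, (\<lambda>_. {}), (\<lambda>_. {})) (S, Lf, Lb)"
  shows "Lf u \<subseteq> V \<and> Lb u \<subseteq> V"
  using assms
proof (induction "(S, Lf, Lb)" arbitrary: S Lf Lb u rule: rtranclp_induct)
  case (step st)
  obtain S0 Lf0 Lb0 where st: "st = (S0, Lf0, Lb0)" by (cases st)
  with step.hyps(2) obtain v where "v \<in> V"
    and "Lf = add_hub v (fst ` center_graph V E len Lf0 Lb0 v) Lf0"
    and "Lb = add_hub v (snd ` center_graph V E len Lf0 Lb0 v) Lb0"
    by (auto simp: ghhl_step_iff)
  then show ?case using step.hyps(3)[OF st] by (auto simp: add_hub_def)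
qed simp

lemma ghhl_output_is_HL:
  assumes "ghhl_output V E len Lf Lb"
  shows "is_HL V E len Lf Lb"
  using assms ghhl_run_labels_subset by (fastforce simp: ghhl_output_def is_HL_def uncovered_def)

lemma max_center_graph_lower_bound:
  assumes "finite V" "is_HL V E len Lo Bo"
    and "a = sqrt (card V) * real (hl_size V Lo Bo) / 2"
    and "\<forall>h\<in>V. card (center_graph V E len Lf Lb h) \<le> m"
  shows "real (card V) * (real (card (uncovered V E len Lf Lb)))\<^sup>2 \<le> real m * a\<^sup>2"
proof -
  have "real (card (uncovered V E len Lf Lb)) \<le> sqrt m * real (hl_size V Lo Bo) / 2"
    using card_uncovered_le assms by blast
  then have "real (card V) * (real (card (uncovered V E len Lf Lb)))\<^sup>2
      \<le> real (card V) * (sqrt m * real (hl_size V Lo Bo) / 2)\<^sup>2"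
    by (intro mult_left_mono power_mono) auto
  then show ?thesis unfolding assms(3) by (simp add: power_mult_distrib power_divide mult_ac)
qed

text \<open>Selected vertices have empty center graphs, since selecting v covers all of G_v and the
uncovered set only shrinks.\<close>

definition ghhl_invariant ::
  "nat set \<Rightarrow> (nat \<times> nat) set \<Rightarrow> (nat \<times> nat \<Rightarrow> real) \<Rightarrow> real \<Rightarrow> ghhl_state \<Rightarrow> bool" where
  "ghhl_invariant V E len a st = (case st of (S, Lf, Lb) \<Rightarrow>
     (\<forall>h\<in>S. center_graph V E len Lf Lb h = {}) \<and>
     real (hl_size V Lf Lb) + potential a (real (card (uncovered V E len Lf Lb))) \<le> 4 * a)"

lemma ghhl_invariant_step:
  assumes fin: "finite V" and HL: "is_HL V E len Lo Bo"
    and a: "a = sqrt (card V) * real (hl_size V Lo Bo) / 2"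
    and inv: "ghhl_invariant V E len a (S, Lf, Lb)"
    and step: "ghhl_step V E len (S, Lf, Lb) st'"
  shows "ghhl_invariant V E len a st'"
proof -
  define CG where "CG = center_graph V E len Lf Lb"
  define U where "U = uncovered V E len Lf Lb"
  from step obtain v where v: "v \<in> V - S" and max: "\<forall>v'\<in>V - S. card (CG v') \<le> card (CG v)"
    and st': "st' = (insert v S, add_hub v (fst ` CG v) Lf, add_hub v (snd ` CG v) Lb)"
    by (auto simp: ghhl_step_iff CG_def)
  define Lf' Lb' where "Lf' = add_hub v (fst ` CG v) Lf" and "Lb' = add_hub v (snd ` CG v) Lb"
  define U' where "U' = uncovered V E len Lf' Lb'"
  define m where "m = card (CG v)"
  have empty: "\<forall>h\<in>S. CG h = {}"
    and pot: "real (hl_size V Lf Lb) + potential a (card U) \<le> 4 * a"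
    using inv by (auto simp: ghhl_invariant_def CG_def U_def)
  have CU: "CG v \<subseteq> U"
    by (simp add: CG_def U_def center_graph_subset_uncovered)
  have finU: "finite U"
    using uncovered_subset fin unfolding U_def by (meson finite_SigmaI finite_subset)
  have empty': "\<forall>h\<in>insert v S. center_graph V E len Lf' Lb' h = {}"
    using empty center_graph_add_hub_subset[where Lf = Lf and Lb = Lb and v = v]
    unfolding Lf'_def Lb'_def CG_def by blast
  have "hl_size V Lf' Lb' \<le> hl_size V Lf Lb + 2 * min m (card V)"
    using hl_size_select_le[OF fin, where E = E and len = len and Lf = Lf and Lb = Lb and v = v]
    by (simp add: Lf'_def Lb'_def CG_def m_def)
  then have size: "real (hl_size V Lf' Lb') \<le> real (hl_size V Lf Lb) + real (2 * min m (card V))"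
    by (simp only: of_nat_add[symmetric] of_nat_le_iff)
  have mU: "m \<le> card U" using card_mono[OF finU CU] by (simp add: m_def)
  have a0: "0 \<le> a" unfolding a by simp
  have "\<forall>h\<in>V. card (CG h) \<le> m" using max empty by (auto simp: m_def)
  then have "real (card V) * (real (card U))\<^sup>2 \<le> real m * a\<^sup>2"
    using max_center_graph_lower_bound[OF fin HL a] by (simp add: CG_def U_def)
  moreover have "0 < card V" using v fin by (auto simp: card_gt_0_iff)
  ultimately have step_pays:
    "real (2 * min m (card V)) + potential a (real (card U) - real m) \<le> potential a (card U)"
    using mU a0 by (intro potential_pays_for_step) auto
  have "card U' \<le> card U - m"
    using card_mono[of "U - CG v" U'] finU uncovered_add_hub_subset card_Diff_subset[OF _ CU]
      finite_subset[OF CU finU]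
    by (simp add: m_def U'_def Lf'_def Lb'_def U_def CG_def)
  then have "potential a (card U') \<le> potential a (real (card U) - real m)"
    using mU a0 by (intro potential_mono) auto
  then have "real (hl_size V Lf' Lb') + potential a (card U') \<le> 4 * a"
    using size step_pays pot by linarith
  then show ?thesis
    using empty' by (simp add: st' ghhl_invariant_def U'_def Lf'_def Lb'_def)
qed

lemma ghhl_run_invariant:
  assumes fin: "finite V" and HL: "is_HL V E len Lo Bo"
    and a: "a = sqrt (card V) * real (hl_size V Lo Bo) / 2"
    and run: "(ghhl_step V E len)\<^sup>*\<^sup>* ({}, (\<lambda>_. {}), (\<lambda>_. {})) st"
  shows "ghhl_invariant V E len a st"
  using run
proof induction
  case base
  have "0 \<le> a" unfolding a by simp
  then show ?case by (simp add: ghhl_invariant_def hl_size_def potential_le)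
next
  case (step st st')
  then show ?case by (cases st) (use ghhl_invariant_step[OF fin HL a] in blast)
qed

theorem ghhl_output_size_le:
  assumes fin: "finite V" and out: "ghhl_output V E len Lf Lb"
  shows "real (hl_size V Lf Lb) \<le> 2 * sqrt (card V) * real (hl_opt V E len)"
proof -
  obtain Lo Bo where HL: "is_HL V E len Lo Bo" and opt: "hl_size V Lo Bo = hl_opt V E len"
    using hl_opt_attained[OF ghhl_output_is_HL[OF out]] .
  define a where "a = sqrt (card V) * real (hl_size V Lo Bo) / 2"
  obtain S where "(ghhl_step V E len)\<^sup>*\<^sup>* ({}, (\<lambda>_. {}), (\<lambda>_. {})) (S, Lf, Lb)"
    using out by (auto simp: ghhl_output_def)
  then have "ghhl_invariant V E len a (S, Lf, Lb)"
    by (rule ghhl_run_invariant[OF fin HL a_def])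
  then have "real (hl_size V Lf Lb) + potential a (card (uncovered V E len Lf Lb)) \<le> 4 * a"
    by (simp add: ghhl_invariant_def)
  moreover have "0 \<le> potential a (card (uncovered V E len Lf Lb))"
    by (rule potential_nonneg) (simp_all add: a_def)
  ultimately show ?thesis by (simp add: a_def opt)
qed

theorem mainTheorem3:
  shows "\<exists>c>0. \<forall>V E len Lf Lb.
           valid_graph V E len \<and> 2 \<le> card V \<and> ghhl_output V E len Lf Lb \<longrightarrow>
           real (hl_size V Lf Lb) \<le> c * sqrt (real (card V)) * ln (real (card V)) * real (hl_opt V E len)"
proof (intro exI[of _ "2 / ln 2"] conjI allI impI)
  fix V E len Lf Lb
  assume asm: "valid_graph V E len \<and> 2 \<le> card V \<and> ghhl_output V E len Lf Lb"
  then have "real (hl_size V Lf Lb) \<le> 2 * sqrt (card V) * real (hl_opt V E len)"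
    by (intro ghhl_output_size_le) (auto simp: valid_graph_def)
  moreover have "2 \<le> 2 / ln 2 * ln (real (card V))"
    using asm by (simp add: field_simps)
  then have "2 * (sqrt (card V) * real (hl_opt V E len))
      \<le> (2 / ln 2 * ln (real (card V))) * (sqrt (card V) * real (hl_opt V E len))"
    by (intro mult_right_mono) auto
  ultimately show "real (hl_size V Lf Lb)
      \<le> 2 / ln 2 * sqrt (real (card V)) * ln (real (card V)) * real (hl_opt V E len)"
    by (simp add: algebra_simps)
qed simp

end
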